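(* Let $P$ be an $n \times n$ partial Latin square with $r$ completely filled columns, one further column in which exactly $s$ cells are filled, and all other columns empty. If $n \geq 2r+s$, then $P$ is completable.
   Context: A partial Latin square of order $n$ is an $n\times n$ array in which each cell is empty or contains one symbol from $\{1,\dots,n\}$, with no symbol occurring twice in a row or column. $P$ is completable if there is an $n\times n$ Latin square (no empty cells) agreeing with $P$ on every nonempty cell of $P$. *)

theory Defs
  imports Main
begin

text \<open>A partial array of order n: P i j is the content of cell (row i, column j),
  None = empty. Only cells with i < n and j < n are relevant; symbols are 1..n.\<close>

definition partial_latin_square :: "nat \<Rightarrow> (nat \<Rightarrow> nat \<Rightarrow> nat option) \<Rightarrow> bool" where
  "partial_latin_square n P \<longleftrightarrow>
     (\<forall>i<n. \<forall>j<n. \<forall>x. P i j = Some x \<longrightarrow> x \<in> {1..n}) \<and>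
     (\<forall>i<n. \<forall>j<n. \<forall>j'<n. j \<noteq> j' \<and> P i j \<noteq> None \<longrightarrow> P i j \<noteq> P i j') \<and>
     (\<forall>j<n. \<forall>i<n. \<forall>i'<n. i \<noteq> i' \<and> P i j \<noteq> None \<longrightarrow> P i j \<noteq> P i' j)"

definition latin_square :: "nat \<Rightarrow> (nat \<Rightarrow> nat \<Rightarrow> nat option) \<Rightarrow> bool" where
  "latin_square n L \<longleftrightarrow> partial_latin_square n L \<and> (\<forall>i<n. \<forall>j<n. L i j \<noteq> None)"

definition completable :: "nat \<Rightarrow> (nat \<Rightarrow> nat \<Rightarrow> nat option) \<Rightarrow> bool" where
  "completable n P \<longleftrightarrow>
     (\<exists>L. latin_square n L \<and> (\<forall>i<n. \<forall>j<n. P i j \<noteq> None \<longrightarrow> L i j = P i j))"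

definition filled_in_col :: "nat \<Rightarrow> (nat \<Rightarrow> nat \<Rightarrow> nat option) \<Rightarrow> nat \<Rightarrow> nat" where
  "filled_in_col n P j = card {i. i < n \<and> P i j \<noteq> None}"

end

(* First fill the n - s empty cells of column c. Row i may take any symbol that occurs neither
   in column c nor in row i; row i meets only the r full columns, so at least (n - s) - r >= r
   symbols are admissible, while a symbol absent from column c is excluded from at most r rows,
   one per full column. These two bounds give Hall's condition for rows versus admissible
   symbols, and a system of distinct representatives yields r + 1 full columns. Such a Latin
   rectangle completes column by column: with k full columns every row misses n - k symbols and
   every symbol is missing from n - k rows, so Hall's condition holds by double counting. *)

theory Submission
  imports Defs
begin

section \<open>Hall's marriage theorem\<close>

definition hall_condition :: "'a set \<Rightarrow> ('a \<Rightarrow> 'b set) \<Rightarrow> bool" where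
  "hall_condition I A \<longleftrightarrow> (\<forall>J\<subseteq>I. card J \<le> card (\<Union>(A ` J)))"

lemma hall_condition_subset: "hall_condition I A \<Longrightarrow> K \<subseteq> I \<Longrightarrow> hall_condition K A"
  unfolding hall_condition_def by blast

lemma hall_condition_Diff_critical:
  assumes fin: "finite I" "\<And>i. i \<in> I \<Longrightarrow> finite (A i)" and hall: "hall_condition I A"
    and J: "J \<subseteq> I" "card (\<Union>(A ` J)) \<le> card J"
  shows "hall_condition (I - J) (\<lambda>i. A i - \<Union>(A ` J))"
  unfolding hall_condition_def
proof (intro allI impI)
  fix K assume K: "K \<subseteq> I - J"
  let ?U = "\<Union>(A ` J)"
  have fin_K: "finite K" and fin_J: "finite J" using K J fin(1) finite_subset by blast+
  have fin_U: "finite ?U" using fin_J J fin(2) by blast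
  have "card K + card J = card (K \<union> J)"
    using K fin_K fin_J by (subst card_Un_disjoint) auto
  also have "\<dots> \<le> card (\<Union>(A ` (K \<union> J)))"
    using hall K J unfolding hall_condition_def by blast
  also have "\<dots> \<le> card (\<Union>((\<lambda>i. A i - ?U) ` K) \<union> ?U)"
    using fin_K fin_U K fin(2) by (intro card_mono) auto
  also have "\<dots> \<le> card (\<Union>((\<lambda>i. A i - ?U) ` K)) + card ?U"
    by (rule card_Un_le)
  finally show "card K \<le> card (\<Union>((\<lambda>i. A i - ?U) ` K))"
    using J(2) by linarith
qed

lemma hall_condition_Diff_surplus:
  assumes surplus: "\<And>J. J \<subseteq> I \<Longrightarrow> J \<noteq> {} \<Longrightarrow> J \<noteq> I \<Longrightarrow> card J < card (\<Union>(A ` J))"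
    and "i \<in> I"
  shows "hall_condition (I - {i}) (\<lambda>i. A i - {x})"
  unfolding hall_condition_def
proof (intro allI impI)
  fix K assume K: "K \<subseteq> I - {i}"
  show "card K \<le> card (\<Union>((\<lambda>i. A i - {x}) ` K))"
  proof (cases "K = {}")
    case False
    with K \<open>i \<in> I\<close> have "card K < card (\<Union>(A ` K))"
      by (intro surplus) auto
    moreover have "card (\<Union>(A ` K)) - 1 \<le> card (\<Union>(A ` K) - {x})"
      using diff_card_le_card_Diff[of "{x}"] by simp
    moreover have "\<Union>((\<lambda>i. A i - {x}) ` K) = \<Union>(A ` K) - {x}"
      by blast
    ultimately show ?thesis by auto
  qed simp
qed

(* Halmos-Vaughan: if some proper nonempty J is critical, match J inside its neighbourhood and
   I - J outside it; otherwise every proper subset has surplus, so i may take any x in A i. *)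
theorem Hall_marriage:
  assumes "finite I" "\<And>i. i \<in> I \<Longrightarrow> finite (A i)" "hall_condition I A"
  shows "\<exists>f. inj_on f I \<and> (\<forall>i\<in>I. f i \<in> A i)"
  using assms
proof (induction "card I" arbitrary: I A rule: less_induct)
  case less
  note fin = less.prems(1,2) and hall = less.prems(3)
  show ?case
  proof (cases "\<exists>J. J \<subseteq> I \<and> J \<noteq> {} \<and> J \<noteq> I \<and> card (\<Union>(A ` J)) \<le> card J")
    case True
    then obtain J where J: "J \<subseteq> I" "J \<noteq> {}" "J \<noteq> I" "card (\<Union>(A ` J)) \<le> card J"
      by blast
    let ?U = "\<Union>(A ` J)"
    have card: "card J < card I" "card (I - J) < card I"
      using J fin(1) by (auto intro!: psubset_card_mono)
    have fin_J: "finite J" "\<And>i. i \<in> J \<Longrightarrow> finite (A i)"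
      using J(1) fin finite_subset by blast+
    have fin_IJ: "finite (I - J)" "\<And>i. i \<in> I - J \<Longrightarrow> finite (A i - ?U)"
      using fin by blast+
    obtain f1 where f1: "inj_on f1 J" "\<forall>i\<in>J. f1 i \<in> A i"
      using less.hyps[OF card(1) fin_J hall_condition_subset[OF hall J(1)]] by blast
    obtain f2 where f2: "inj_on f2 (I - J)" "\<forall>i\<in>I - J. f2 i \<in> A i - ?U"
      using less.hyps[OF card(2) fin_IJ hall_condition_Diff_critical[OF fin hall J(1,4)]] by blast
    let ?f = "\<lambda>i. if i \<in> J then f1 i else f2 i"
    have "f1 ` J \<subseteq> ?U" "f2 ` (I - J) \<inter> ?U = {}"
      using f1(2) f2(2) by auto
    then have "f1 ` J \<inter> f2 ` (I - J) = {}"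
      by blast
    with f1(1) f2(1) have "inj_on ?f (J \<union> (I - J))"
      by (rule inj_on_disjoint_Un)
    then have "inj_on ?f I"
      using J(1) by (simp add: Un_absorb1)
    moreover have "\<forall>i\<in>I. ?f i \<in> A i" using f1 f2 by auto
    ultimately show ?thesis by blast
  next
    case False
    hence surplus: "\<And>J. J \<subseteq> I \<Longrightarrow> J \<noteq> {} \<Longrightarrow> J \<noteq> I \<Longrightarrow> card J < card (\<Union>(A ` J))"
      by (meson not_le)
    show ?thesis
    proof (cases "I = {}")
      case False
      then obtain i where i: "i \<in> I" by blast
      have "card {i} \<le> card (\<Union>(A ` {i}))"
        using hall i unfolding hall_condition_def by blast
      then have "A i \<noteq> {}"
        by auto
      then obtain x where x: "x \<in> A i"
        by blast
      have card: "card (I - {i}) < card I"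
        using fin(1) i by (rule card_Diff1_less)
      have fin_Ii: "finite (I - {i})" "\<And>k. k \<in> I - {i} \<Longrightarrow> finite (A k - {x})"
        using fin by blast+
      obtain f where f: "inj_on f (I - {i})" "\<forall>k\<in>I - {i}. f k \<in> A k - {x}"
        using less.hyps[OF card fin_Ii hall_condition_Diff_surplus[OF surplus i]] by blast
      have x_new: "x \<notin> f ` (I - {i})"
        using f(2) by blast
      have "inj_on (f(i := x)) (I - {i})"
        using f(1) x_new by (rule inj_on_fun_updI)
      with x_new have "inj_on (f(i := x)) (insert i (I - {i}))"
        by (intro inj_on_insert[THEN iffD2]) simp
      then have "inj_on (f(i := x)) I"
        by (simp only: insert_Diff[OF i])
      moreover have "\<forall>k\<in>I. (f(i := x)) k \<in> A k" using f x by auto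
      ultimately show ?thesis by blast
    qed simp
  qed
qed

lemma hall_condition_by_double_counting:
  assumes "finite I" "\<And>i. i \<in> I \<Longrightarrow> finite (A i)" "0 < d"
    and "\<And>i. i \<in> I \<Longrightarrow> d \<le> card (A i)" and "\<And>y. card {i \<in> I. y \<in> A i} \<le> d"
  shows "hall_condition I A"
  unfolding hall_condition_def
proof (intro allI impI)
  fix J assume J: "J \<subseteq> I"
  let ?N = "\<Union>(A ` J)"
  have fin: "finite J" "finite ?N"
    using J assms(1,2) finite_subset by blast+
  have "card J * d = (\<Sum>i\<in>J. d)"
    by simp
  also have "\<dots> \<le> (\<Sum>i\<in>J. card (A i))"
    using J assms(4) by (intro sum_mono) auto
  also have "\<dots> = (\<Sum>i\<in>J. card {y \<in> ?N. y \<in> A i})"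
    by (intro sum.cong) (auto intro!: arg_cong[where f = card])
  also have "\<dots> = (\<Sum>y\<in>?N. card {i \<in> J. y \<in> A i})"
    using fin by (intro sum_multicount_gen) auto
  also have "\<dots> \<le> (\<Sum>y\<in>?N. card {i \<in> I. y \<in> A i})"
    using J assms(1) by (intro sum_mono card_mono) auto
  also have "\<dots> \<le> (\<Sum>y\<in>?N. d)"
    using assms(5) by (intro sum_mono)
  also have "\<dots> = card ?N * d"
    by simp
  finally show "card J \<le> card ?N"
    using \<open>0 < d\<close> by simp
qed

lemma hall_condition_by_few_misses:
  assumes "finite I" "finite Y" "card I \<le> card Y" "\<And>i. i \<in> I \<Longrightarrow> A i \<subseteq> Y"
    and "\<And>i. i \<in> I \<Longrightarrow> d \<le> card (A i)" and "\<And>y. y \<in> Y \<Longrightarrow> card {i \<in> I. y \<notin> A i} \<le> d"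
  shows "hall_condition I A"
  unfolding hall_condition_def
proof (intro allI impI)
  fix J assume J: "J \<subseteq> I"
  have "\<Union>(A ` J) \<subseteq> Y"
    using J assms(4) by blast
  then have fin_N: "finite (\<Union>(A ` J))"
    using assms(2) by (rule finite_subset)
  show "card J \<le> card (\<Union>(A ` J))"
  proof (cases "card J \<le> d")
    case True
    show ?thesis
    proof (cases "J = {}")
      case False
      then obtain i where "i \<in> J" by blast
      then have "card (A i) \<le> card (\<Union>(A ` J))"
        using fin_N by (intro card_mono) auto
      with True \<open>i \<in> J\<close> J assms(5) show ?thesis by fastforce
    qed simp
  next
    case False
    have "Y \<subseteq> \<Union>(A ` J)"
    proof
      fix y assume "y \<in> Y"
      show "y \<in> \<Union>(A ` J)"
      proof (rule ccontr)
        assume "y \<notin> \<Union>(A ` J)"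
        then have "J \<subseteq> {i \<in> I. y \<notin> A i}" using J by blast
        then have "card J \<le> card {i \<in> I. y \<notin> A i}"
          using assms(1) by (intro card_mono) auto
        with assms(6)[OF \<open>y \<in> Y\<close>] False show False by linarith
      qed
    qed
    then have "card Y \<le> card (\<Union>(A ` J))"
      by (rule card_mono[OF fin_N])
    moreover have "card J \<le> card I"
      using J assms(1) by (rule card_mono[rotated])
    ultimately show ?thesis
      using assms(3) by linarith
  qed
qed

section \<open>Partial Latin squares and Latin rectangles\<close>

lemma partial_latin_square_symbol:
  "partial_latin_square n P \<Longrightarrow> i < n \<Longrightarrow> j < n \<Longrightarrow> P i j = Some x \<Longrightarrow> x \<in> {1..n}"
  unfolding partial_latin_square_def by blast

lemma partial_latin_square_row_unique:
  "partial_latin_square n P \<Longrightarrow> i < n \<Longrightarrow> j < n \<Longrightarrow> j' < n \<Longrightarrow> P i j = Some x \<Longrightarrow> P i j' = Some x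
    \<Longrightarrow> j = j'"
  unfolding partial_latin_square_def by (metis option.distinct(1))

lemma partial_latin_square_col_unique:
  "partial_latin_square n P \<Longrightarrow> i < n \<Longrightarrow> i' < n \<Longrightarrow> j < n \<Longrightarrow> P i j = Some x \<Longrightarrow> P i' j = Some x
    \<Longrightarrow> i = i'"
  unfolding partial_latin_square_def by (metis option.distinct(1))

definition row_symbols :: "nat \<Rightarrow> (nat \<Rightarrow> nat \<Rightarrow> nat option) \<Rightarrow> nat \<Rightarrow> nat set" where
  "row_symbols n P i = {x. \<exists>j<n. P i j = Some x}"

definition col_symbols :: "nat \<Rightarrow> (nat \<Rightarrow> nat \<Rightarrow> nat option) \<Rightarrow> nat \<Rightarrow> nat set" where
  "col_symbols n P j = {x. \<exists>i<n. P i j = Some x}"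

lemma finite_row_symbols: "finite (row_symbols n P i)"
proof -
  have "row_symbols n P i \<subseteq> (\<lambda>j. the (P i j)) ` {..<n}"
    unfolding row_symbols_def by force
  then show ?thesis
    by (rule finite_subset) simp
qed

lemma finite_col_symbols: "finite (col_symbols n P j)"
proof -
  have "col_symbols n P j \<subseteq> (\<lambda>i. the (P i j)) ` {..<n}"
    unfolding col_symbols_def by force
  then show ?thesis
    by (rule finite_subset) simp
qed

lemma card_row_symbols_le:
  assumes "finite D" and "\<forall>j<n. j \<notin> D \<longrightarrow> P i j = None"
  shows "card (row_symbols n P i) \<le> card D"
proof -
  have "row_symbols n P i \<subseteq> (\<lambda>j. the (P i j)) ` D"
    using assms(2) unfolding row_symbols_def by force
  then have "card (row_symbols n P i) \<le> card ((\<lambda>j. the (P i j)) ` D)"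
    using assms(1) by (intro card_mono) auto
  also have "\<dots> \<le> card D"
    by (rule card_image_le[OF assms(1)])
  finally show ?thesis .
qed

lemma card_col_symbols_le: "card (col_symbols n P j) \<le> filled_in_col n P j"
proof -
  let ?F = "{i. i < n \<and> P i j \<noteq> None}"
  have "col_symbols n P j \<subseteq> (\<lambda>i. the (P i j)) ` ?F"
    unfolding col_symbols_def by force
  then have "card (col_symbols n P j) \<le> card ((\<lambda>i. the (P i j)) ` ?F)"
    by (intro card_mono) auto
  also have "\<dots> \<le> card ?F"
    by (rule card_image_le) simp
  finally show ?thesis
    unfolding filled_in_col_def .
qed

lemma col_symbols_full_column:
  assumes P: "partial_latin_square n P" and "j < n" and full: "\<forall>i<n. P i j \<noteq> None"
  shows "col_symbols n P j = {1..n}"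
proof -
  let ?g = "\<lambda>i. the (P i j)"
  have cell: "P i j = Some (?g i)" if "i < n" for i
    using full that by simp
  have "inj_on ?g {..<n}"
    by (intro inj_onI) (metis cell lessThan_iff partial_latin_square_col_unique[OF P _ _ \<open>j < n\<close>])
  then have "card (?g ` {..<n}) = card {1..n}"
    by (simp add: card_image)
  moreover have "?g ` {..<n} \<subseteq> {1..n}"
    using cell partial_latin_square_symbol[OF P _ \<open>j < n\<close>] by auto
  ultimately have "?g ` {..<n} = {1..n}"
    by (simp add: card_subset_eq)
  moreover have "col_symbols n P j = ?g ` {..<n}"
    using cell unfolding col_symbols_def by force
  ultimately show ?thesis by simp
qed

lemma card_rows_with_symbol_eq_card_cols_with_symbol:
  assumes P: "partial_latin_square n P"
  shows "card {i. i < n \<and> x \<in> row_symbols n P i} = card {j. j < n \<and> x \<in> col_symbols n P j}"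
proof -
  let ?S = "{(i, j). i < n \<and> j < n \<and> P i j = Some x}"
  have "fst ` ?S = {i. i < n \<and> x \<in> row_symbols n P i}"
    unfolding row_symbols_def by force
  moreover have "snd ` ?S = {j. j < n \<and> x \<in> col_symbols n P j}"
    unfolding col_symbols_def by force
  moreover have "card (fst ` ?S) = card ?S"
    using partial_latin_square_row_unique[OF P] by (intro card_image inj_onI) auto
  moreover have "card (snd ` ?S) = card ?S"
    using partial_latin_square_col_unique[OF P] by (intro card_image inj_onI) auto
  ultimately show ?thesis
    by simp
qed

definition fill_column ::
  "nat \<Rightarrow> nat set \<Rightarrow> (nat \<Rightarrow> nat) \<Rightarrow> (nat \<Rightarrow> nat \<Rightarrow> nat option) \<Rightarrow> nat \<Rightarrow> nat \<Rightarrow> nat option" where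
  "fill_column c E f P = (\<lambda>i j. if j = c \<and> i \<in> E then Some (f i) else P i j)"

lemma partial_latin_square_fill_column:
  assumes P: "partial_latin_square n P"
    and empty: "\<forall>i\<in>E. P i c = None" and inj: "inj_on f E"
    and f: "\<forall>i\<in>E. f i \<in> {1..n} - row_symbols n P i - col_symbols n P c"
  shows "partial_latin_square n (fill_column c E f P)"
proof -
  let ?Q = "fill_column c E f P"
  have new: "f i \<in> {1..n}" "P i j \<noteq> Some (f i)" "P i' c \<noteq> Some (f i)"
    if "i \<in> E" "j < n" "i' < n" for i j i'
    using f that unfolding row_symbols_def col_symbols_def by auto
  show ?thesis
    unfolding partial_latin_square_def
  proof (intro conjI allI impI)
    fix i j x assume "i < n" "j < n" "?Q i j = Some x"
    then show "x \<in> {1..n}"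
      using new partial_latin_square_symbol[OF P] by (auto simp: fill_column_def split: if_splits)
  next
    fix i j j' assume "i < n" "j < n" "j' < n" "j \<noteq> j' \<and> ?Q i j \<noteq> None"
    then show "?Q i j \<noteq> ?Q i j'"
      using new new(2,3)[symmetric] partial_latin_square_row_unique[OF P]
      by (auto simp: fill_column_def split: if_splits)
  next
    fix j i i' assume "j < n" "i < n" "i' < n" "i \<noteq> i' \<and> ?Q i j \<noteq> None"
    then show "?Q i j \<noteq> ?Q i' j"
      using new new(2,3)[symmetric] partial_latin_square_col_unique[OF P] empty inj
      by (auto simp: fill_column_def inj_on_def split: if_splits)
  qed
qed

lemma completable_fill_column:
  assumes "completable n (fill_column c E f P)" and "\<forall>i\<in>E. P i c = None"
  shows "completable n P"
proof -
  have agree: "fill_column c E f P i j = P i j" if "P i j \<noteq> None" for i j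
    using assms(2) that unfolding fill_column_def by auto
  from assms(1) obtain L where "latin_square n L"
    and "\<forall>i<n. \<forall>j<n. fill_column c E f P i j \<noteq> None \<longrightarrow> L i j = fill_column c E f P i j"
    unfolding completable_def by blast
  with agree show ?thesis
    unfolding completable_def by auto
qed

(* The usual Latin rectangle transposed: its filled lines are the columns in D. *)
definition latin_rectangle :: "nat \<Rightarrow> nat set \<Rightarrow> (nat \<Rightarrow> nat \<Rightarrow> nat option) \<Rightarrow> bool" where
  "latin_rectangle n D P \<longleftrightarrow> partial_latin_square n P \<and> D \<subseteq> {..<n} \<and>
     (\<forall>j\<in>D. \<forall>i<n. P i j \<noteq> None) \<and> (\<forall>j<n. j \<notin> D \<longrightarrow> (\<forall>i<n. P i j = None))"

lemma hall_condition_partial_column: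
  assumes P: "partial_latin_square n P" and "C \<subseteq> {..<n}"
    and empty: "\<forall>j<n. j \<notin> C \<and> j \<noteq> c \<longrightarrow> (\<forall>i<n. P i j = None)"
    and n: "2 * card C + filled_in_col n P c \<le> n"
  shows "hall_condition {i. i < n \<and> P i c = None}
    (\<lambda>i. {1..n} - row_symbols n P i - col_symbols n P c)"
proof -
  let ?E = "{i. i < n \<and> P i c = None}" and ?F = "{i. i < n \<and> P i c \<noteq> None}"
  let ?Y = "{1..n} - col_symbols n P c"
  have fin_C: "finite C"
    using \<open>C \<subseteq> {..<n}\<close> finite_subset by blast
  have "?E = {..<n} - ?F" "?F \<subseteq> {..<n}"
    by auto
  then have card_E: "card ?E = n - filled_in_col n P c"
    unfolding filled_in_col_def by (simp add: card_Diff_subset)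
  have card_Y: "n - filled_in_col n P c \<le> card ?Y"
    using diff_card_le_card_Diff[OF finite_col_symbols, of "{1..n}" n P c] card_col_symbols_le[of n P c]
    by simp
  have "card C \<le> card (?Y - row_symbols n P i)" if "i \<in> ?E" for i
  proof -
    have "card (row_symbols n P i) \<le> card C"
      using that empty by (intro card_row_symbols_le[OF fin_C]) auto
    then show ?thesis
      using card_Y n diff_card_le_card_Diff[OF finite_row_symbols, of ?Y n P i] by linarith
  qed
  moreover have "card {i \<in> ?E. y \<notin> ?Y - row_symbols n P i} \<le> card C" if "y \<in> ?Y" for y
  proof -
    have "{j. j < n \<and> y \<in> col_symbols n P j} \<subseteq> C"
      using that empty unfolding col_symbols_def by auto
    then have "card {i. i < n \<and> y \<in> row_symbols n P i} \<le> card C"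
      unfolding card_rows_with_symbol_eq_card_cols_with_symbol[OF P]
      using fin_C by (rule card_mono[rotated])
    moreover have "{i \<in> ?E. y \<notin> ?Y - row_symbols n P i} \<subseteq> {i. i < n \<and> y \<in> row_symbols n P i}"
      using that by auto
    moreover have "finite {i. i < n \<and> y \<in> row_symbols n P i}"
      by simp
    ultimately show ?thesis
      by (meson card_mono le_trans)
  qed
  ultimately have "hall_condition ?E (\<lambda>i. ?Y - row_symbols n P i)"
    using card_E card_Y by (intro hall_condition_by_few_misses[where Y = ?Y and d = "card C"]) auto
  moreover have "(\<lambda>i. ?Y - row_symbols n P i) = (\<lambda>i. {1..n} - row_symbols n P i - col_symbols n P c)"
    by auto
  ultimately show ?thesis
    by simp
qed

lemma latin_rectangle_fill_column:
  assumes P: "partial_latin_square n P" and "D \<subseteq> {..<n}" "c < n"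
    and full: "\<forall>j\<in>D. \<forall>i<n. P i j \<noteq> None"
    and empty: "\<forall>j<n. j \<notin> D \<and> j \<noteq> c \<longrightarrow> (\<forall>i<n. P i j = None)"
    and hall: "hall_condition {i. i < n \<and> P i c = None}
      (\<lambda>i. {1..n} - row_symbols n P i - col_symbols n P c)"
  shows "\<exists>f. latin_rectangle n (insert c D) (fill_column c {i. i < n \<and> P i c = None} f P)"
proof -
  let ?E = "{i. i < n \<and> P i c = None}"
  have "finite ?E" "\<And>i. finite ({1..n} - row_symbols n P i - col_symbols n P c)"
    by simp_all
  then obtain f where f: "inj_on f ?E" "\<forall>i\<in>?E. f i \<in> {1..n} - row_symbols n P i - col_symbols n P c"
    using Hall_marriage[OF _ _ hall] by blast
  then have "partial_latin_square n (fill_column c ?E f P)"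
    using P by (intro partial_latin_square_fill_column) auto
  then have "latin_rectangle n (insert c D) (fill_column c ?E f P)"
    using assms unfolding latin_rectangle_def fill_column_def by auto
  then show ?thesis
    by blast
qed

lemma hall_condition_latin_rectangle:
  assumes R: "latin_rectangle n D P" and "c < n" "c \<notin> D"
  shows "hall_condition {i. i < n \<and> P i c = None}
    (\<lambda>i. {1..n} - row_symbols n P i - col_symbols n P c)"
proof -
  note P = R[unfolded latin_rectangle_def]
  let ?A = "\<lambda>i. {1..n} - row_symbols n P i"
  have fin_D: "finite D"
    using P finite_subset by blast
  have "D \<subset> {..<n}"
    using P \<open>c < n\<close> \<open>c \<notin> D\<close> by blast
  then have "card D < n"
    using psubset_card_mono[of "{..<n}" D] by simp
  have empty_c: "{i. i < n \<and> P i c = None} = {..<n}" "col_symbols n P c = {}"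
    using P \<open>c < n\<close> \<open>c \<notin> D\<close> unfolding col_symbols_def by auto
  have "n - card D \<le> card (?A i)" if "i < n" for i
  proof -
    have "n - card D \<le> card {1..n} - card (row_symbols n P i)"
      using card_row_symbols_le[OF fin_D, of n P i] P that by auto
    also have "\<dots> \<le> card (?A i)"
      using diff_card_le_card_Diff[OF finite_row_symbols, of "{1..n}" n P i] by simp
    finally show ?thesis .
  qed
  moreover have "card {i \<in> {..<n}. y \<in> ?A i} \<le> n - card D" for y
  proof (cases "y \<in> {1..n}")
    case True
    let ?R = "{i. i < n \<and> y \<in> row_symbols n P i}"
    have "col_symbols n P j = {1..n}" if "j \<in> D" for j
      using P that by (intro col_symbols_full_column) auto
    then have "D \<subseteq> {j. j < n \<and> y \<in> col_symbols n P j}"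
      using P True by auto
    then have "card D \<le> card ?R"
      unfolding card_rows_with_symbol_eq_card_cols_with_symbol[OF conjunct1[OF P]]
      by (intro card_mono) auto
    moreover have "{i \<in> {..<n}. y \<in> ?A i} = {..<n} - ?R"
      using True by auto
    moreover have "card ({..<n} - ?R) = n - card ?R"
      by (subst card_Diff_subset) auto
    ultimately show ?thesis
      by simp
  qed auto
  ultimately have "hall_condition {..<n} ?A"
    using \<open>card D < n\<close> by (intro hall_condition_by_double_counting[where d = "n - card D"]) auto
  then show ?thesis
    unfolding empty_c by simp
qed

lemma latin_rectangle_completable:
  "latin_rectangle n D P \<Longrightarrow> completable n P"
proof (induction "n - card D" arbitrary: D P rule: less_induct)
  case less
  show ?case
  proof (cases "D = {..<n}")
    case True
    then have "latin_square n P"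
      using less.prems unfolding latin_rectangle_def latin_square_def by auto
    then show ?thesis
      unfolding completable_def by blast
  next
    case False
    then obtain c where c: "c < n" "c \<notin> D"
      using less.prems unfolding latin_rectangle_def by blast
    have R: "partial_latin_square n P" "D \<subseteq> {..<n}" "\<forall>j\<in>D. \<forall>i<n. P i j \<noteq> None"
      "\<forall>j<n. j \<notin> D \<and> j \<noteq> c \<longrightarrow> (\<forall>i<n. P i j = None)"
      using less.prems unfolding latin_rectangle_def by auto
    obtain f where f: "latin_rectangle n (insert c D) (fill_column c {i. i < n \<and> P i c = None} f P)"
      using latin_rectangle_fill_column[OF R(1,2) c(1) R(3,4) hall_condition_latin_rectangle[OF less.prems c]]
      by blast
    have "finite D" "insert c D \<subseteq> {..<n}"
      using R(2) c finite_subset by auto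
    then have "n - card (insert c D) < n - card D"
      using c card_mono[of "{..<n}" "insert c D"] by simp
    with f have "completable n (fill_column c {i. i < n \<and> P i c = None} f P)"
      by (intro less.hyps)
    then show ?thesis
      by (rule completable_fill_column) simp
  qed
qed

theorem lemma2:
  fixes n r s c :: nat and C :: "nat set" and P :: "nat \<Rightarrow> nat \<Rightarrow> nat option"
  assumes "partial_latin_square n P"
    and "C \<subseteq> {..<n}" and "card C = r"
    and "c < n" and "c \<notin> C"
    and "\<forall>j\<in>C. \<forall>i<n. P i j \<noteq> None"
    and "filled_in_col n P c = s"
    and "\<forall>j<n. j \<notin> C \<and> j \<noteq> c \<longrightarrow> (\<forall>i<n. P i j = None)"
    and "n \<ge> 2 * r + s"
  shows "completable n P"
proof -
  have "hall_condition {i. i < n \<and> P i c = None}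
      (\<lambda>i. {1..n} - row_symbols n P i - col_symbols n P c)"
    using assms by (intro hall_condition_partial_column) auto
  then obtain f where "latin_rectangle n (insert c C) (fill_column c {i. i < n \<and> P i c = None} f P)"
    using latin_rectangle_fill_column[OF assms(1,2,4,6,8)] by blast
  then have "completable n (fill_column c {i. i < n \<and> P i c = None} f P)"
    by (rule latin_rectangle_completable)
  then show ?thesis
    by (rule completable_fill_column) simp
qed

end
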